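(* Up to multiplication by a positive integer, every basic weight of a basic system of type $A$ is one of the following (written in coordinates $(\lambda_1,\dots,\lambda_{n+1})$, $\lambda_k=\langle\lambda,e_k\rangle$): (1) $(A_1,1,1)$: $(\tfrac12,-\tfrac12)$, $(-\tfrac12,\tfrac12)$; (2) $(A_2,1,1)$: $(-\tfrac13,\tfrac23,-\tfrac13)$; (3) $(A_2,1,2)$: $(\tfrac13,\tfrac13,-\tfrac23)$; (4) $(A_2,2,1)$: $(\tfrac23,-\tfrac13,-\tfrac13)$; (5) $(A_2,2,2)$: $(\tfrac13,-\tfrac23,\tfrac13)$; (6) $(A_3,2,2)$: $(\tfrac12,-\tfrac12,\tfrac12,-\tfrac12)$.
   Context: $A_n$ is realized in the hyperplane $\{\sum x_k=0\}$ of $\mathbb R^{n+1}$ with orthonormal basis $e_1,\dots,e_{n+1}$ and standard inner product, with simple roots $\alpha_k=e_k-e_{k+1}$. Let $W$ be the Weyl group, $\alpha^\vee=2\alpha/\langle\alpha,\alpha\rangle$. A weight is integral if $\langle\lambda,\alpha^\vee\rangle\in\mathbb Z$ for all roots $\alpha$; $\overline\lambda$ is the dominant weight in $W\lambda$. For $I=\Delta\setminus\{\alpha_i\}$, $J=\Delta\setminus\{\alpha_j\}$, a basic weight of $(\Phi,i,j)$ is an integral $\lambda$ with $\langle\lambda,\alpha^\vee\rangle\in\mathbb Z_{>0}$ for all $\alpha\in I$ and $\{\alpha\in\Delta:\langle\overline\lambda,\alpha\rangle=0\}=J$; $(\Phi,i,j)$ is a basic system if it has a basic weight. *)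

theory Defs
  imports Complex_Main
begin

text \<open>Root system A_n realized in the hyperplane sum x_k = 0 of R^(n+1).
  Vectors of R^(n+1) are functions nat => real, coordinates indexed by 1..n+1
  (all other coordinates are 0).\<close>

definition ip :: "nat \<Rightarrow> (nat \<Rightarrow> real) \<Rightarrow> (nat \<Rightarrow> real) \<Rightarrow> real" where
  "ip n x y = (\<Sum>k = 1..n+1. x k * y k)"

definition ebasis :: "nat \<Rightarrow> nat \<Rightarrow> real" where
  "ebasis a = (\<lambda>t. if t = a then 1 else 0)"

definition vdiff :: "(nat \<Rightarrow> real) \<Rightarrow> (nat \<Rightarrow> real) \<Rightarrow> nat \<Rightarrow> real" where
  "vdiff x y = (\<lambda>t. x t - y t)"

definition vscale :: "real \<Rightarrow> (nat \<Rightarrow> real) \<Rightarrow> nat \<Rightarrow> real" where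
  "vscale c x = (\<lambda>t. c * x t)"

definition Vspace :: "nat \<Rightarrow> (nat \<Rightarrow> real) set" where
  "Vspace n = {x. (\<forall>k. k \<notin> {1..n+1} \<longrightarrow> x k = 0) \<and> (\<Sum>k = 1..n+1. x k) = 0}"

definition roots :: "nat \<Rightarrow> (nat \<Rightarrow> real) set" where
  "roots n = {vdiff (ebasis a) (ebasis b) | a b. a \<in> {1..n+1} \<and> b \<in> {1..n+1} \<and> a \<noteq> b}"

definition simple_root :: "nat \<Rightarrow> nat \<Rightarrow> real" where
  "simple_root k = vdiff (ebasis k) (ebasis (Suc k))"

definition simple_roots :: "nat \<Rightarrow> (nat \<Rightarrow> real) set" where
  "simple_roots n = simple_root ` {1..n}"

definition coroot :: "nat \<Rightarrow> (nat \<Rightarrow> real) \<Rightarrow> nat \<Rightarrow> real" where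
  "coroot n \<alpha> = vscale (2 / ip n \<alpha> \<alpha>) \<alpha>"

definition reflection :: "nat \<Rightarrow> (nat \<Rightarrow> real) \<Rightarrow> (nat \<Rightarrow> real) \<Rightarrow> nat \<Rightarrow> real" where
  "reflection n \<alpha> x = vdiff x (vscale (ip n x (coroot n \<alpha>)) \<alpha>)"

inductive_set weyl_orbit :: "nat \<Rightarrow> (nat \<Rightarrow> real) \<Rightarrow> (nat \<Rightarrow> real) set"
  for n :: nat and lam :: "nat \<Rightarrow> real" where
  base: "lam \<in> weyl_orbit n lam"
| step: "\<mu> \<in> weyl_orbit n lam \<Longrightarrow> \<alpha> \<in> roots n \<Longrightarrow> reflection n \<alpha> \<mu> \<in> weyl_orbit n lam"

definition dominant :: "nat \<Rightarrow> (nat \<Rightarrow> real) \<Rightarrow> bool" where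
  "dominant n \<mu> \<longleftrightarrow> (\<forall>\<alpha> \<in> simple_roots n. ip n \<mu> (coroot n \<alpha>) \<ge> 0)"

definition dom_weight :: "nat \<Rightarrow> (nat \<Rightarrow> real) \<Rightarrow> nat \<Rightarrow> real" where
  "dom_weight n lam = (THE \<mu>. \<mu> \<in> weyl_orbit n lam \<and> dominant n \<mu>)"

definition integral_weight :: "nat \<Rightarrow> (nat \<Rightarrow> real) \<Rightarrow> bool" where
  "integral_weight n lam \<longleftrightarrow> lam \<in> Vspace n \<and> (\<forall>\<alpha> \<in> roots n. ip n lam (coroot n \<alpha>) \<in> \<int>)"

definition basic_weight :: "nat \<Rightarrow> nat \<Rightarrow> nat \<Rightarrow> (nat \<Rightarrow> real) \<Rightarrow> bool" where
  "basic_weight n i j lam \<longleftrightarrow>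
     integral_weight n lam \<and>
     (\<forall>\<alpha> \<in> simple_roots n - {simple_root i}.
         ip n lam (coroot n \<alpha>) \<in> \<int> \<and> ip n lam (coroot n \<alpha>) > 0) \<and>
     {\<alpha> \<in> simple_roots n. ip n (dom_weight n lam) \<alpha> = 0} = simple_roots n - {simple_root j}"

definition basic_system :: "nat \<Rightarrow> nat \<Rightarrow> nat \<Rightarrow> bool" where
  "basic_system n i j \<longleftrightarrow> (\<exists>lam. basic_weight n i j lam)"

definition coords :: "real list \<Rightarrow> nat \<Rightarrow> real" where
  "coords xs = (\<lambda>k. if 1 \<le> k \<and> k \<le> length xs then xs ! (k - 1) else 0)"

definition listed_weights :: "nat \<Rightarrow> nat \<Rightarrow> nat \<Rightarrow> (nat \<Rightarrow> real) set" where
  "listed_weights n i j =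
     (if (n, i, j) = (1, 1, 1) then {coords [1/2, -1/2], coords [-1/2, 1/2]}
      else if (n, i, j) = (2, 1, 1) then {coords [-1/3, 2/3, -1/3]}
      else if (n, i, j) = (2, 1, 2) then {coords [1/3, 1/3, -2/3]}
      else if (n, i, j) = (2, 2, 1) then {coords [2/3, -1/3, -1/3]}
      else if (n, i, j) = (2, 2, 2) then {coords [1/3, -2/3, 1/3]}
      else if (n, i, j) = (3, 2, 2) then {coords [1/2, -1/2, 1/2, -1/2]}
      else {})"

end

theory Submission
  imports Defs "HOL-Combinatorics.Permutations"
begin

(* The Weyl group of A_n acts on weights by permuting coordinates, and a weight is dominant iff
   its coordinates are weakly decreasing, so the dominant weight in the orbit of lam is the
   decreasing rearrangement of lam. For a basic weight of (A_n, i, j) this rearrangement is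
   constant except for a single drop after position j. Hence lam takes only two values a > b;
   integrality makes a - b a positive integer m, and since the coordinates sum to zero,
   j a + (n + 1 - j) b = 0. On the other hand lam drops strictly at every position except i.
   Two consecutive drops would need three distinct values, which forces n <= 2, or n = 3 and
   i = 2; in these few cases lam is determined by m. *)

lemma ip_vdiff: "ip n x (vdiff y z) = ip n x y - ip n x z"
  by (simp add: ip_def vdiff_def algebra_simps sum_subtractf)

lemma ip_vscale: "ip n x (vscale c y) = c * ip n x y"
  by (simp add: ip_def vscale_def algebra_simps sum_distrib_left)

lemma ip_ebasis: "a \<in> {1..n+1} \<Longrightarrow> ip n x (ebasis a) = x a"
  by (simp add: ip_def ebasis_def if_distrib cong: if_cong)

lemma ip_root:
  assumes "a \<in> {1..n+1}" "b \<in> {1..n+1}"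
  shows "ip n x (vdiff (ebasis a) (ebasis b)) = x a - x b"
  using assms by (simp add: ip_vdiff ip_ebasis)

lemma coroot_root:
  assumes "a \<in> {1..n+1}" "b \<in> {1..n+1}" "a \<noteq> b"
  shows "coroot n (vdiff (ebasis a) (ebasis b)) = vdiff (ebasis a) (ebasis b)"
proof -
  have "ip n (vdiff (ebasis a) (ebasis b)) (vdiff (ebasis a) (ebasis b))
      = vdiff (ebasis a) (ebasis b) a - vdiff (ebasis a) (ebasis b) b"
    using assms(1,2) by (rule ip_root)
  also have "\<dots> = 2"
    using assms(3) by (simp add: vdiff_def ebasis_def)
  finally show ?thesis by (simp add: coroot_def vscale_def)
qed

lemma ip_coroot_root:
  assumes "a \<in> {1..n+1}" "b \<in> {1..n+1}" "a \<noteq> b"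
  shows "ip n x (coroot n (vdiff (ebasis a) (ebasis b))) = x a - x b"
  using assms by (simp add: coroot_root ip_root)

lemma ip_simple_root: "k \<in> {1..n} \<Longrightarrow> ip n x (simple_root k) = x k - x (Suc k)"
  unfolding simple_root_def by (rule ip_root) auto

lemma ip_coroot_simple_root: "k \<in> {1..n} \<Longrightarrow> ip n x (coroot n (simple_root k)) = x k - x (Suc k)"
  unfolding simple_root_def by (rule ip_coroot_root) auto

lemma inj_simple_root: "inj simple_root"
proof
  fix k l assume "simple_root k = simple_root l"
  then have "simple_root k k = simple_root l k" by simp
  then show "k = l" by (auto simp: simple_root_def vdiff_def ebasis_def split: if_splits)
qed

lemma simple_root_in_roots: "k \<in> {1..n} \<Longrightarrow> simple_root k \<in> roots n"
  unfolding simple_root_def roots_def by force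

lemma reflection_root:
  assumes "a \<in> {1..n+1}" "b \<in> {1..n+1}" "a \<noteq> b"
  shows "reflection n (vdiff (ebasis a) (ebasis b)) x = x \<circ> transpose a b"
  unfolding reflection_def ip_coroot_root[OF assms]
  using assms by (auto simp: vdiff_def vscale_def ebasis_def transpose_def fun_eq_iff)

lemma weyl_orbit_permutes:
  assumes "\<mu> \<in> weyl_orbit n lam"
  shows "\<exists>\<sigma>. \<sigma> permutes {1..n+1} \<and> \<mu> = lam \<circ> \<sigma>"
  using assms
proof induction
  case base
  show ?case using permutes_id by fastforce
next
  case (step \<mu> \<alpha>)
  then obtain \<sigma> where \<sigma>: "\<sigma> permutes {1..n+1}" "\<mu> = lam \<circ> \<sigma>" by blast
  from \<open>\<alpha> \<in> roots n\<close> obtain a b where ab: "\<alpha> = vdiff (ebasis a) (ebasis b)"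
    "a \<in> {1..n+1}" "b \<in> {1..n+1}" "a \<noteq> b"
    unfolding roots_def by blast
  have "reflection n \<alpha> \<mu> = lam \<circ> (\<sigma> \<circ> transpose a b)"
    using reflection_root[OF ab(2-4)] ab(1) \<sigma>(2) by (simp add: comp_assoc)
  moreover have "\<sigma> \<circ> transpose a b permutes {1..n+1}"
    using permutes_compose[OF permutes_swap_id[OF ab(2,3)] \<sigma>(1)] .
  ultimately show ?case by blast
qed

lemma finite_weyl_orbit: "finite (weyl_orbit n lam)"
proof (rule finite_subset)
  show "weyl_orbit n lam \<subseteq> (\<lambda>\<sigma>. lam \<circ> \<sigma>) ` {\<sigma>. \<sigma> permutes {1..n+1}}"
    using weyl_orbit_permutes by blast
  show "finite ((\<lambda>\<sigma>. lam \<circ> \<sigma>) ` {\<sigma>. \<sigma> permutes {1..n+1}})"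
    by (simp add: finite_permutations)
qed

lemma dominant_iff: "dominant n \<mu> \<longleftrightarrow> (\<forall>k\<in>{1..n}. \<mu> (Suc k) \<le> \<mu> k)"
  by (auto simp: dominant_def simple_roots_def ip_coroot_simple_root)

lemma dominant_antimono:
  assumes "dominant n \<mu>" "1 \<le> s" "s \<le> t" "t \<le> n + 1"
  shows "\<mu> t \<le> \<mu> s"
proof (rule lift_Suc_antimono_le_ivl[of "{1..n}"])
  show "\<mu> (Suc k) \<le> \<mu> k" if "k \<in> {1..n}" for k
    using assms(1) that by (simp add: dominant_iff)
  show "{s..<t} \<subseteq> {1..n}" using assms(2,4) by auto
qed (fact assms(3))

text \<open>Pairing with (1, 2, ..., n+1) is a height function which the simple reflection s_k raises by
  the coefficient that dominance requires to be nonnegative; so a minimiser of the height on the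
  finite orbit is dominant.\<close>
lemma ip_of_nat_reflection_simple_root:
  assumes "k \<in> {1..n}"
  shows "ip n real (reflection n (simple_root k) x) = ip n real x + (x k - x (Suc k))"
  using assms by (simp add: reflection_def ip_coroot_simple_root ip_vdiff ip_vscale ip_simple_root)

lemma weyl_orbit_has_dominant: "\<exists>\<mu>\<in>weyl_orbit n lam. dominant n \<mu>"
proof -
  let ?O = "weyl_orbit n lam" and ?h = "ip n real"
  have "?O \<noteq> {}" using weyl_orbit.base by blast
  then obtain \<mu> where \<mu>: "\<mu> \<in> ?O" and min: "\<And>\<nu>. \<nu> \<in> ?O \<Longrightarrow> ?h \<mu> \<le> ?h \<nu>"
    using arg_min_if_finite[OF finite_weyl_orbit, of n lam ?h] by (metis not_le)
  have "dominant n \<mu>"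
    unfolding dominant_iff
  proof
    fix k assume k: "k \<in> {1..n}"
    show "\<mu> (Suc k) \<le> \<mu> k"
      using min[OF weyl_orbit.step[OF \<mu> simple_root_in_roots[OF k]]]
        ip_of_nat_reflection_simple_root[OF k] by simp
  qed
  with \<mu> show ?thesis by blast
qed

lemma card_permutes_Collect:
  assumes "\<sigma> permutes S"
  shows "card {t\<in>S. P (\<sigma> t)} = card {t\<in>S. P t}"
proof (rule bij_betw_same_card)
  show "bij_betw \<sigma> {t\<in>S. P (\<sigma> t)} {t\<in>S. P t}"
    using assms permutes_image[of \<sigma> S] permutes_inj_on[of \<sigma> S "{t\<in>S. P (\<sigma> t)}"]
    by (auto simp: bij_betw_def)
qed

text \<open>If c = lam (\<sigma> k) > lam (\<tau> k), then at least k entries of lam \<circ> \<sigma> but at most k - 1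
  entries of lam \<circ> \<tau> are \<ge> c, although both count the entries of lam that are \<ge> c.\<close>
lemma dominant_rearrangement_unique:
  assumes \<sigma>: "\<sigma> permutes {1..n+1}" and \<tau>: "\<tau> permutes {1..n+1}"
    and "dominant n (lam \<circ> \<sigma>)" "dominant n (lam \<circ> \<tau>)"
  shows "lam \<circ> \<sigma> = lam \<circ> \<tau>"
proof -
  let ?S = "{1..n+1}"
  have entry_le: "\<not> lam (\<tau> k) < lam (\<sigma> k)"
    if \<sigma>: "\<sigma> permutes ?S" and \<tau>: "\<tau> permutes ?S" and dom: "dominant n (lam \<circ> \<sigma>)" "dominant n (lam \<circ> \<tau>)"
      and k: "k \<in> ?S" for \<sigma> \<tau> k
  proof
    assume less: "lam (\<tau> k) < lam (\<sigma> k)"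
    let ?C = "\<lambda>\<pi>. {t\<in>?S. lam (\<sigma> k) \<le> lam (\<pi> t)}"
    have "{1..k} \<subseteq> ?C \<sigma>"
    proof
      fix t assume t: "t \<in> {1..k}"
      then have "lam (\<sigma> k) \<le> lam (\<sigma> t)"
        using dominant_antimono[OF dom(1), of t k] k by simp
      then show "t \<in> ?C \<sigma>" using t k by simp
    qed
    then have "k \<le> card (?C \<sigma>)"
      using card_mono[of "?C \<sigma>" "{1..k}"] by simp
    moreover have "?C \<tau> \<subseteq> {1..k-1}"
    proof
      fix t assume t: "t \<in> ?C \<tau>"
      have "\<not> k \<le> t"
      proof
        assume "k \<le> t"
        then have "lam (\<tau> t) \<le> lam (\<tau> k)"
          using dominant_antimono[OF dom(2), of k t] k t by simp
        then show False using t less by simp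
      qed
      then show "t \<in> {1..k-1}" using t by simp
    qed
    then have "card (?C \<tau>) \<le> k - 1"
      using card_mono[of "{1..k-1}"] by simp
    moreover have "card (?C \<sigma>) = card (?C \<tau>)"
      using card_permutes_Collect[OF \<sigma>, of "\<lambda>x. lam (\<sigma> k) \<le> lam x"]
        card_permutes_Collect[OF \<tau>, of "\<lambda>x. lam (\<sigma> k) \<le> lam x"] by simp
    ultimately show False using k by (simp; linarith)
  qed
  show ?thesis
  proof
    fix k
    show "(lam \<circ> \<sigma>) k = (lam \<circ> \<tau>) k"
    proof (cases "k \<in> ?S")
      case True
      then show ?thesis using entry_le[OF \<sigma> \<tau> assms(3,4) True] entry_le[OF \<tau> \<sigma> assms(4,3) True] by simp
    next
      case False
      then show ?thesis using permutes_not_in[OF \<sigma> False] permutes_not_in[OF \<tau> False] by simp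
    qed
  qed
qed

lemma ex1_dominant_in_weyl_orbit: "\<exists>!\<mu>. \<mu> \<in> weyl_orbit n lam \<and> dominant n \<mu>"
proof (rule ex_ex1I)
  show "\<exists>\<mu>. \<mu> \<in> weyl_orbit n lam \<and> dominant n \<mu>"
    using weyl_orbit_has_dominant by blast
  fix \<mu> \<nu>
  assume "\<mu> \<in> weyl_orbit n lam \<and> dominant n \<mu>" "\<nu> \<in> weyl_orbit n lam \<and> dominant n \<nu>"
  moreover obtain \<sigma> \<tau> where "\<sigma> permutes {1..n+1}" "\<mu> = lam \<circ> \<sigma>" "\<tau> permutes {1..n+1}" "\<nu> = lam \<circ> \<tau>"
    using weyl_orbit_permutes calculation by meson
  ultimately show "\<mu> = \<nu>" using dominant_rearrangement_unique by blast
qed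

lemma dom_weight_in_weyl_orbit: "dom_weight n lam \<in> weyl_orbit n lam"
  using theI'[OF ex1_dominant_in_weyl_orbit] by (simp add: dom_weight_def)

lemma dominant_dom_weight: "dominant n (dom_weight n lam)"
  using theI'[OF ex1_dominant_in_weyl_orbit] by (simp add: dom_weight_def)

lemma integral_weight_coord_diff:
  assumes "integral_weight n lam" "s \<in> {1..n+1}" "t \<in> {1..n+1}"
  shows "lam s - lam t \<in> \<int>"
proof (cases "s = t")
  case False
  then have "vdiff (ebasis s) (ebasis t) \<in> roots n"
    using assms(2,3) unfolding roots_def by blast
  then show ?thesis
    using assms(1) ip_coroot_root[OF assms(2,3) False] by (auto simp: integral_weight_def)
qed simp

lemma basic_weight_descent:
  assumes "basic_weight n i j lam" "k \<in> {1..n}" "k \<noteq> i"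
  shows "lam (Suc k) < lam k"
proof -
  have "simple_root k \<in> simple_roots n - {simple_root i}"
    using assms(2,3) inj_simple_root by (auto simp: simple_roots_def inj_eq)
  then have "0 < ip n lam (coroot n (simple_root k))"
    using assms(1) unfolding basic_weight_def by blast
  then show ?thesis using ip_coroot_simple_root[OF assms(2)] by simp
qed

lemma basic_weight_dom_weight_flat_iff:
  assumes "basic_weight n i j lam" "k \<in> {1..n}"
  shows "dom_weight n lam (Suc k) = dom_weight n lam k \<longleftrightarrow> k \<noteq> j"
proof -
  have "simple_root k \<in> simple_roots n"
    using assms(2) by (simp add: simple_roots_def)
  then have "ip n (dom_weight n lam) (simple_root k) = 0 \<longleftrightarrow> simple_root k \<noteq> simple_root j"
    using assms(1) unfolding basic_weight_def by blast
  then show ?thesis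
    using ip_simple_root[OF assms(2)] inj_simple_root by (auto simp: inj_eq)
qed

lemma lift_Suc_eq_ivl:
  assumes "s \<le> t" "\<And>k. s \<le> k \<Longrightarrow> k < t \<Longrightarrow> f (Suc k) = f k"
  shows "f t = f s"
  using assms by (induction t rule: dec_induct) auto

lemma step_function_of_flat_iff:
  fixes f :: "nat \<Rightarrow> 'a" and n j t :: nat
  assumes "j \<in> {1..n}" "\<And>k. k \<in> {1..n} \<Longrightarrow> f (Suc k) = f k \<longleftrightarrow> k \<noteq> j" "t \<in> {1..n+1}"
  shows "f t = (if t \<le> j then f 1 else f (Suc j))"
proof (cases "t \<le> j")
  case True
  then have "f t = f 1"
    by (intro lift_Suc_eq_ivl[of 1 t f]) (use assms in auto)
  with True show ?thesis by simp
next
  case False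
  then have "f t = f (Suc j)"
    by (intro lift_Suc_eq_ivl[of "Suc j" t f]) (use assms in auto)
  with False show ?thesis by simp
qed

lemma basic_weight_dom_weight_drop:
  assumes "basic_weight n i j lam" "j \<in> {1..n}"
  shows "dom_weight n lam (Suc j) < dom_weight n lam 1"
proof -
  have "dom_weight n lam (Suc j) \<le> dom_weight n lam j" "dom_weight n lam (Suc j) \<noteq> dom_weight n lam j"
    using dominant_antimono[OF dominant_dom_weight, of j "Suc j"]
      basic_weight_dom_weight_flat_iff[OF assms] assms(2) by auto
  moreover have "dom_weight n lam j = dom_weight n lam 1"
    using step_function_of_flat_iff[OF assms(2) basic_weight_dom_weight_flat_iff[OF assms(1)], of j]
      assms(2) by simp
  ultimately show ?thesis by simp
qed

lemma basic_weight_two_valued: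
  assumes lam: "basic_weight n i j lam" and j: "j \<in> {1..n}"
  obtains a b m where "0 < m" "a - b = real m" "\<forall>t\<in>{1..n+1}. lam t = a \<or> lam t = b"
    "real j * a + real (n + 1 - j) * b = 0"
proof -
  let ?S = "{1..n+1}"
  define \<mu> where "\<mu> = dom_weight n lam"
  obtain \<sigma> where \<sigma>: "\<sigma> permutes ?S" "\<mu> = lam \<circ> \<sigma>"
    using weyl_orbit_permutes[OF dom_weight_in_weyl_orbit] unfolding \<mu>_def by blast
  define a b where "a = \<mu> 1" and "b = \<mu> (Suc j)"
  have step: "\<mu> t = (if t \<le> j then a else b)" if "t \<in> ?S" for t
    using step_function_of_flat_iff[OF j basic_weight_dom_weight_flat_iff[OF lam] that]
    by (simp add: a_def b_def \<mu>_def)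
  have "b < a"
    using basic_weight_dom_weight_drop[OF lam j] by (simp add: a_def b_def \<mu>_def)
  have "a - b \<in> \<int>"
    using integral_weight_coord_diff[of n lam "\<sigma> j" "\<sigma> (Suc j)"] lam j step[of j]
      permutes_in_image[OF \<sigma>(1)] by (auto simp: basic_weight_def \<sigma>(2) b_def)
  then obtain z :: int where "a - b = of_int z"
    by (rule Ints_cases)
  with \<open>b < a\<close> have m: "0 < nat z" "a - b = real (nat z)"
    by auto
  have "lam t = a \<or> lam t = b" if "t \<in> ?S" for t
  proof -
    obtain u where "u \<in> ?S" "t = \<sigma> u"
      using permutes_image[OF \<sigma>(1)] \<open>t \<in> ?S\<close> by blast
    then show ?thesis using step[of u] \<sigma>(2) by (auto split: if_splits)
  qed
  moreover have "real j * a + real (n + 1 - j) * b = 0"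
  proof -
    have "?S = {1..j} \<union> {Suc j..n+1}" "{1..j} \<inter> {Suc j..n+1} = {}"
      using j by auto
    then have "(\<Sum>t\<in>?S. \<mu> t) = real j * a + real (n + 1 - j) * b"
      using step by (simp add: sum.union_disjoint)
    moreover have "(\<Sum>t\<in>?S. \<mu> t) = (\<Sum>t\<in>?S. lam t)"
      using sum.permute[OF \<sigma>(1), of lam] \<sigma>(2) by simp
    ultimately show ?thesis
      using lam by (simp add: basic_weight_def integral_weight_def Vspace_def)
  qed
  ultimately show thesis using m that by blast
qed

lemma eq_vscale_coords_iff:
  assumes "lam \<in> Vspace n" "length xs = n + 1"
  shows "lam = vscale c (coords xs) \<longleftrightarrow> (\<forall>k<n+1. lam (Suc k) = c * xs ! k)"
proof
  assume coord: "\<forall>k<n+1. lam (Suc k) = c * xs ! k"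
  show "lam = vscale c (coords xs)"
  proof
    fix t
    show "lam t = vscale c (coords xs) t"
    proof (cases "t \<in> {1..n+1}")
      case True
      then show ?thesis using coord[rule_format, of "t - 1"] assms(2) by (auto simp: vscale_def coords_def)
    next
      case False
      then show ?thesis using assms by (auto simp: Vspace_def vscale_def coords_def)
    qed
  qed
qed (use assms(2) in \<open>simp add: vscale_def coords_def\<close>)

lemma two_valued_descents_cases:
  fixes f :: "nat \<Rightarrow> 'a::linorder"
  assumes "i \<in> {1..n}" "\<forall>t\<in>{1..n+1}. f t = a \<or> f t = b"
    and "\<forall>k\<in>{1..n}. k \<noteq> i \<longrightarrow> f (Suc k) < f k"
  shows "n \<le> 2 \<or> (n = 3 \<and> i = 2)"
proof (rule ccontr)
  assume "\<not> (n \<le> 2 \<or> (n = 3 \<and> i = 2))"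
  define k where "k = (if i = 1 then 2 else if i = 2 then 3 else 1 :: nat)"
  have "k \<in> {1..n}" "Suc k \<in> {1..n}" "k \<noteq> i" "Suc k \<noteq> i"
    using \<open>\<not> (n \<le> 2 \<or> (n = 3 \<and> i = 2))\<close> assms(1) by (auto simp: k_def)
  then have "f (Suc (Suc k)) < f (Suc k)" "f (Suc k) < f k"
    using assms(3) by auto
  moreover have "\<forall>t\<in>{k, Suc k, Suc (Suc k)}. f t = a \<or> f t = b"
    using assms(2) \<open>k \<in> {1..n}\<close> \<open>Suc k \<in> {1..n}\<close> by auto
  ultimately show False by auto
qed

lemma two_valued_weight_in_listed_weights:
  assumes V: "lam \<in> Vspace n" and "n \<ge> 1" "i \<in> {1..n}" "j \<in> {1..n}"
    and two_valued: "\<forall>t\<in>{1..n+1}. lam t = a \<or> lam t = b"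
    and "a - b = real m" "0 < m"
    and balance: "real j * a + real (n + 1 - j) * b = 0"
    and descents: "\<forall>k\<in>{1..n}. k \<noteq> i \<longrightarrow> lam (Suc k) < lam k"
  shows "\<exists>\<mu>\<in>listed_weights n i j. lam = vscale (real m) \<mu>"
proof -
  have sum: "(\<Sum>k=1..n+1. lam k) = 0" using V by (simp add: Vspace_def)
  consider "n = 1" | "n = 2" | "n = 3" "i = 2"
    using two_valued_descents_cases[OF \<open>i \<in> {1..n}\<close> two_valued descents] \<open>n \<ge> 1\<close> by linarith
  then show ?thesis
    using assms sum by cases
      (auto simp: listed_weights_def eval_nat_numeral eq_vscale_coords_iff[OF V] less_Suc_eq atLeastAtMostSuc_conv)
qed

theorem theorem5p7:
  fixes n i j :: nat and lam :: "nat \<Rightarrow> real"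
  assumes "n \<ge> 1" and "i \<in> {1..n}" and "j \<in> {1..n}"
    and "basic_system n i j"
    and "basic_weight n i j lam"
  shows "\<exists>m::nat. m > 0 \<and> (\<exists>\<mu> \<in> listed_weights n i j. lam = vscale (real m) \<mu>)"
proof -
  obtain a b m where m: "0 < m" "a - b = real m"
    and two_valued: "\<forall>t\<in>{1..n+1}. lam t = a \<or> lam t = b"
    and balance: "real j * a + real (n + 1 - j) * b = 0"
    using basic_weight_two_valued[OF assms(5,3)] .
  have V: "lam \<in> Vspace n"
    using assms(5) by (simp add: basic_weight_def integral_weight_def)
  have descents: "\<forall>k\<in>{1..n}. k \<noteq> i \<longrightarrow> lam (Suc k) < lam k"
    using basic_weight_descent[OF assms(5)] by blast
  show ?thesis
    using m two_valued_weight_in_listed_weights[OF V assms(1-3) two_valued m(2,1) balance descents]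
    by blast
qed

end
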